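(* An orientation of a graph $G$ admits a homogeneous labeling if and only if it contains no badly oriented cycle.
   Context: Given an orientation of a (simple) graph $G$, a homogeneous labeling is an assignment of real labels to the arcs such that for every vertex all its outgoing arcs have the same label, all its incoming arcs have the same label, and (if both exist) the label of its incoming arcs is smaller than the label of its outgoing arcs. A cycle $(v_0,v_1,\ldots,v_{n-1})$ of $G$ (indices mod $n$) is badly oriented if there is a vertex $v_i$ whose incident cycle arcs are $v_{i-1}v_i$ and $v_iv_{i+1}$ (i.e. oriented from $v_{i-1}$ to $v_i$ and from $v_i$ to $v_{i+1}$), and there is no vertex $v_j$ whose incident cycle arcs are $v_{j+1}v_j$ and $v_jv_{j-1}$. *)

theory Defs
  imports Complex_Main
begin

definition simple_graph :: "'a set \<Rightarrow> ('a \<times> 'a) set \<Rightarrow> bool" where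
  "simple_graph V E \<longleftrightarrow> finite V \<and> E \<subseteq> V \<times> V \<and> sym E \<and> irrefl E"

definition orientation :: "'a set \<Rightarrow> ('a \<times> 'a) set \<Rightarrow> ('a \<times> 'a) set \<Rightarrow> bool" where
  "orientation V E A \<longleftrightarrow> A \<subseteq> E \<and> (\<forall>u v. (u, v) \<in> E \<longrightarrow> ((u, v) \<in> A \<longleftrightarrow> (v, u) \<notin> A))"

definition homogeneous_labeling :: "('a \<times> 'a) set \<Rightarrow> ('a \<times> 'a \<Rightarrow> real) \<Rightarrow> bool" where
  "homogeneous_labeling A f \<longleftrightarrow>
     (\<forall>v. (\<forall>w w'. (v, w) \<in> A \<longrightarrow> (v, w') \<in> A \<longrightarrow> f (v, w) = f (v, w'))
        \<and> (\<forall>u u'. (u, v) \<in> A \<longrightarrow> (u', v) \<in> A \<longrightarrow> f (u, v) = f (u', v))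
        \<and> (\<forall>u w. (u, v) \<in> A \<longrightarrow> (v, w) \<in> A \<longrightarrow> f (u, v) < f (v, w)))"

definition is_cycle :: "('a \<times> 'a) set \<Rightarrow> 'a list \<Rightarrow> bool" where
  "is_cycle E cs \<longleftrightarrow> length cs \<ge> 3 \<and> distinct cs \<and>
     (\<forall>i < length cs. (cs ! i, cs ! ((i + 1) mod length cs)) \<in> E)"

definition badly_oriented :: "('a \<times> 'a) set \<Rightarrow> 'a list \<Rightarrow> bool" where
  "badly_oriented A cs \<longleftrightarrow>
     (let n = length cs; nx = (\<lambda>i. cs ! ((i + 1) mod n)); pv = (\<lambda>i. cs ! ((i + n - 1) mod n)) in
       (\<exists>i < n. (pv i, cs ! i) \<in> A \<and> (cs ! i, nx i) \<in> A) \<and>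
       \<not> (\<exists>j < n. (nx j, cs ! j) \<in> A \<and> (cs ! j, pv j) \<in> A))"

end

theory Submission
  imports Defs
begin

(* A walk is described by its turns (p, x, q); a turn is forward if both arcs at x point along
   the walk and backward if both point against it.  Given a homogeneous labeling, label each edge
   by the label of its arc: this edge label never decreases across a turn that is not backward
   and increases across a forward one.  Hence there is no bad closed walk, i.e. one without
   backward turns but with a forward turn, and badly oriented cycles are precisely the bad closed
   walks without repeated vertex.

   Conversely, a bad closed walk through some vertex x twice splits at x into two shorter closed
   walks, one of which is again bad, so in the absence of badly oriented cycles there is no bad
   closed walk at all.  Now consider the digraph whose nodes are the traversals (u, v) of edges
   and whose arcs are the allowed turns, and label each arc of the orientation by the number of
   traversals from which it is reachable.  Arcs with a common tail or a common head reach each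
   other, and if (v, w) follows (u, v) then (v, w) cannot reach back to (u, v), since that would
   close a bad walk; so this labeling is homogeneous. *)

fun windows :: "'a list \<Rightarrow> ('a \<times> 'a \<times> 'a) set" where
  "windows (a # b # c # xs) = insert (a, b, c) (windows (b # c # xs))"
| "windows _ = {}"

lemma windows_conv_nth:
  "t \<in> windows xs \<longleftrightarrow> (\<exists>i. Suc (Suc i) < length xs \<and> t = (xs ! i, xs ! Suc i, xs ! Suc (Suc i)))"
proof (induction xs rule: windows.induct)
  case (1 a b c xs)
  have split: "(\<exists>i. P i) \<longleftrightarrow> P 0 \<or> (\<exists>i. P (Suc i))" for P :: "nat \<Rightarrow> bool"
    by (metis not0_implies_Suc)
  show ?case by (subst split) (simp add: 1)
qed auto

lemma windows_append_cons:
  assumes "xs \<noteq> []" "ys \<noteq> []"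
  shows "windows (xs @ x # ys) = windows (xs @ [x]) \<union> windows (x # ys) \<union> {(last xs, x, hd ys)}"
  using assms(1)
proof (induction xs rule: windows.induct)
  case (1 a b c xs)
  then show ?case by auto
next
  case ("2_2" a)
  then show ?case using assms(2) by (cases ys) auto
next
  case ("2_3" a b)
  then show ?case using assms(2) by (cases ys) auto
qed simp

definition closed_windows :: "'a list \<Rightarrow> ('a \<times> 'a \<times> 'a) set" where
  "closed_windows cs = windows (last cs # cs @ [hd cs])"

lemma closed_windows_Cons:
  "closed_windows (x # q) = insert (last (x # q), x, hd (q @ [x])) (windows (x # q @ [x]))"
  unfolding closed_windows_def by (cases q) auto

lemma closed_windows_conv_nth:
  assumes "cs \<noteq> []"
  shows "closed_windows cs = (\<lambda>i. (cs ! ((i + length cs - 1) mod length cs), cs ! i,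
    cs ! ((i + 1) mod length cs))) ` {..<length cs}" (is "_ = ?W")
proof (rule set_eqI)
  fix t
  define n where "n = length cs"
  define L where "L = last cs # cs @ [hd cs]"
  have n: "0 < n" using assms n_def by simp
  have prev: "L ! i = cs ! ((i + n - 1) mod n)" if "i < n" for i
  proof (cases i)
    case 0
    then show ?thesis using assms n by (simp add: L_def n_def last_conv_nth)
  next
    case (Suc j)
    then have "(i + n - 1) mod n = j" using that by simp
    then show ?thesis using Suc that by (simp add: L_def n_def nth_append)
  qed
  have here: "L ! Suc i = cs ! i" if "i < n" for i
    using that by (simp add: L_def n_def nth_append)
  have succ: "L ! Suc (Suc i) = cs ! ((i + 1) mod n)" if "i < n" for i
  proof (cases "Suc i < n")
    case False
    then have "Suc i = n" using that by simp
    then show ?thesis using assms by (simp add: L_def n_def nth_append hd_conv_nth)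
  qed (simp add: L_def n_def nth_append)
  have "t \<in> closed_windows cs \<longleftrightarrow> (\<exists>i < n. t = (L ! i, L ! Suc i, L ! Suc (Suc i)))"
    unfolding closed_windows_def windows_conv_nth L_def[symmetric] by (simp add: L_def n_def)
  also have "\<dots> \<longleftrightarrow> (\<exists>i < n. t = (cs ! ((i + n - 1) mod n), cs ! i, cs ! ((i + 1) mod n)))"
    using prev here succ by (metis (no_types, lifting))
  finally show "t \<in> closed_windows cs \<longleftrightarrow> t \<in> ?W" unfolding n_def by auto
qed

lemma closed_windows_rotate1: "closed_windows (rotate1 cs) = closed_windows cs"
proof (cases cs)
  case (Cons a t)
  show ?thesis
  proof (cases t)
    case (Cons b s)
    have "windows (b # s @ [a, b]) = windows (b # s @ [a]) \<union> {(last (b # s), a, b)}"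
      using windows_append_cons[of "b # s" "[b]" a] by simp
    moreover have "windows (a # b # s @ [a]) = insert (a, b, hd (s @ [a])) (windows (b # s @ [a]))"
      by (cases s) auto
    ultimately show ?thesis using \<open>cs = a # t\<close> Cons by (simp add: closed_windows_Cons) blast
  qed (simp add: \<open>cs = a # t\<close>)
qed simp

lemma closed_windows_rotate: "closed_windows (rotate n cs) = closed_windows cs"
  by (induction n) (simp_all add: closed_windows_rotate1)

lemma closed_windows_split:
  "closed_windows (x # q @ x # r) = windows (x # q @ [x]) \<union> windows (x # r @ [x]) \<union>
     {(last (x # r), x, hd (q @ [x])), (last (x # q), x, hd (r @ [x]))}"
proof -
  have "windows ((x # q) @ x # r @ [x]) =
      windows (x # q @ [x]) \<union> windows (x # r @ [x]) \<union> {(last (x # q), x, hd (r @ [x]))}"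
    using windows_append_cons[of "x # q" "r @ [x]" x] by simp
  moreover have "hd ((q @ x # r) @ [x]) = hd (q @ [x])" by (cases q) simp_all
  ultimately show ?thesis by (simp add: closed_windows_Cons)
qed

lemma orientation_subset: "orientation V E A \<Longrightarrow> A \<subseteq> E"
  unfolding orientation_def by blast

lemma orientation_arc_cases: "orientation V E A \<Longrightarrow> (u, v) \<in> E \<Longrightarrow> (u, v) \<in> A \<or> (v, u) \<in> A"
  unfolding orientation_def by blast

lemma orientation_asym: "orientation V E A \<Longrightarrow> (u, v) \<in> A \<Longrightarrow> (v, u) \<notin> A"
  unfolding orientation_def by blast

fun forward :: "('a \<times> 'a) set \<Rightarrow> 'a \<times> 'a \<times> 'a \<Rightarrow> bool" where
  "forward A (p, x, q) \<longleftrightarrow> (p, x) \<in> A \<and> (x, q) \<in> A"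

fun backward :: "('a \<times> 'a) set \<Rightarrow> 'a \<times> 'a \<times> 'a \<Rightarrow> bool" where
  "backward A (p, x, q) \<longleftrightarrow> (q, x) \<in> A \<and> (x, p) \<in> A"

fun allowed_turn :: "('a \<times> 'a) set \<Rightarrow> ('a \<times> 'a) set \<Rightarrow> 'a \<times> 'a \<times> 'a \<Rightarrow> bool" where
  "allowed_turn E A (p, x, q) \<longleftrightarrow> (p, x) \<in> E \<and> (x, q) \<in> E \<and> \<not> backward A (p, x, q)"

definition bad_closed_walk :: "('a \<times> 'a) set \<Rightarrow> ('a \<times> 'a) set \<Rightarrow> 'a list \<Rightarrow> bool" where
  "bad_closed_walk E A cs \<longleftrightarrow>
     (\<forall>t \<in> closed_windows cs. allowed_turn E A t) \<and> (\<exists>t \<in> closed_windows cs. forward A t)"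

lemma bad_closed_walk_rotate: "bad_closed_walk E A (rotate n cs) \<longleftrightarrow> bad_closed_walk E A cs"
  unfolding bad_closed_walk_def closed_windows_rotate ..

lemma closed_windows_edges_iff:
  assumes "cs \<noteq> []"
  shows "(\<forall>(p, x, q) \<in> closed_windows cs. (p, x) \<in> E \<and> (x, q) \<in> E) \<longleftrightarrow>
    (\<forall>i < length cs. (cs ! i, cs ! ((i + 1) mod length cs)) \<in> E)"
    (is "?windows \<longleftrightarrow> ?edges")
proof
  assume ?windows
  then show ?edges using closed_windows_conv_nth[OF assms] by fastforce
next
  assume edges: ?edges
  let ?n = "length cs"
  have n: "0 < ?n" using assms by simp
  have "(cs ! ((i + ?n - 1) mod ?n), cs ! i) \<in> E" if "i < ?n" for i
  proof -
    have "((i + ?n - 1) mod ?n + 1) mod ?n = i"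
      using that n by (simp add: mod_Suc_eq)
    then show ?thesis using edges n by (metis mod_less_divisor)
  qed
  then show ?windows using edges closed_windows_conv_nth[OF assms] by fastforce
qed

lemma badly_oriented_iff_closed_windows:
  "badly_oriented A cs \<longleftrightarrow>
     (\<exists>t \<in> closed_windows cs. forward A t) \<and> (\<forall>t \<in> closed_windows cs. \<not> backward A t)"
proof (cases "cs = []")
  case True
  then show ?thesis by (simp add: badly_oriented_def closed_windows_def)
next
  case False
  then show ?thesis
    unfolding badly_oriented_def Let_def closed_windows_conv_nth[OF False] by auto
qed

lemma bad_closed_walk_iff:
  assumes "cs \<noteq> []"
  shows "bad_closed_walk E A cs \<longleftrightarrow>
    (\<forall>i < length cs. (cs ! i, cs ! ((i + 1) mod length cs)) \<in> E) \<and> badly_oriented A cs"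
proof -
  have "(\<forall>t \<in> closed_windows cs. allowed_turn E A t) \<longleftrightarrow>
      (\<forall>(p, x, q) \<in> closed_windows cs. (p, x) \<in> E \<and> (x, q) \<in> E) \<and>
      (\<forall>t \<in> closed_windows cs. \<not> backward A t)"
    by fastforce
  then show ?thesis
    unfolding bad_closed_walk_def badly_oriented_iff_closed_windows closed_windows_edges_iff[OF assms]
    by blast
qed

lemma bad_closed_walk_length:
  assumes "irrefl E" "orientation V E A" "bad_closed_walk E A cs"
  shows "3 \<le> length cs"
proof (rule ccontr)
  assume "\<not> 3 \<le> length cs"
  then consider "cs = []" | x where "cs = [x]" | x y where "cs = [x, y]"
    by (cases cs; cases "tl cs") (auto simp: numeral_3_eq_3 Suc_le_eq)
  then show False
  proof cases
    case 1
    then show False using assms(3) by (simp add: bad_closed_walk_def closed_windows_def)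
  next
    case (2 x)
    then have "(x, x) \<in> E" using assms(3) by (simp add: bad_closed_walk_def closed_windows_def)
    then show False using assms(1) by (simp add: irrefl_def)
  next
    case (3 x y)
    then have "(x, y) \<in> A \<and> (y, x) \<in> A" using assms(3)
      by (auto simp: bad_closed_walk_def closed_windows_def)
    then show False using orientation_asym[OF assms(2)] by blast
  qed
qed

lemma distinct_bad_closed_walk_is_cycle:
  assumes "simple_graph V E" "orientation V E A" "bad_closed_walk E A cs" "distinct cs"
  shows "set cs \<subseteq> V \<and> is_cycle E cs \<and> badly_oriented A cs"
proof -
  have "3 \<le> length cs"
    using assms(1) bad_closed_walk_length[OF _ assms(2,3)] by (simp add: simple_graph_def)
  then have "cs \<noteq> []" by auto
  then have edges: "\<forall>i < length cs. (cs ! i, cs ! ((i + 1) mod length cs)) \<in> E"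
    and "badly_oriented A cs"
    using assms(3) bad_closed_walk_iff by blast+
  moreover have "set cs \<subseteq> V"
  proof
    fix v assume "v \<in> set cs"
    then obtain i where "i < length cs" "v = cs ! i" by (auto simp: in_set_conv_nth)
    then show "v \<in> V" using edges assms(1) by (auto simp: simple_graph_def)
  qed
  ultimately show ?thesis using \<open>3 \<le> length cs\<close> assms(4) by (simp add: is_cycle_def)
qed

lemma badly_oriented_cycle_is_bad_closed_walk:
  assumes "is_cycle E cs" "badly_oriented A cs"
  shows "bad_closed_walk E A cs"
proof -
  have "cs \<noteq> []" using assms(1) by (auto simp: is_cycle_def)
  then show ?thesis using assms bad_closed_walk_iff by (auto simp: is_cycle_def)
qed

definition edge_label :: "('a \<times> 'a) set \<Rightarrow> ('a \<times> 'a \<Rightarrow> real) \<Rightarrow> 'a \<times> 'a \<Rightarrow> real" where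
  "edge_label A f = (\<lambda>(u, v). if (u, v) \<in> A then f (u, v) else f (v, u))"

lemma edge_label_allowed_turn:
  assumes ori: "orientation V E A" and hom: "homogeneous_labeling A f"
    and turn: "allowed_turn E A (p, x, q)"
  shows "edge_label A f (p, x) \<le> edge_label A f (x, q)"
    and "forward A (p, x, q) \<Longrightarrow> edge_label A f (p, x) < edge_label A f (x, q)"
proof -
  have same_tail: "f (x, p) = f (x, q)" if "(x, p) \<in> A" "(x, q) \<in> A"
    using hom that unfolding homogeneous_labeling_def by blast
  have same_head: "f (p, x) = f (q, x)" if "(p, x) \<in> A" "(q, x) \<in> A"
    using hom that unfolding homogeneous_labeling_def by blast
  have through: "f (p, x) < f (x, q)" if "(p, x) \<in> A" "(x, q) \<in> A"
    using hom that unfolding homogeneous_labeling_def by blast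
  have "(p, x) \<in> A \<or> (x, p) \<in> A" "(x, q) \<in> A \<or> (q, x) \<in> A"
    using turn orientation_arc_cases[OF ori] by auto
  moreover have "(p, x) \<in> A \<Longrightarrow> (x, p) \<notin> A" "(x, q) \<in> A \<Longrightarrow> (q, x) \<notin> A"
    using orientation_asym[OF ori] by auto
  moreover have "\<not> ((q, x) \<in> A \<and> (x, p) \<in> A)" using turn by simp
  ultimately show "edge_label A f (p, x) \<le> edge_label A f (x, q)"
    and "forward A (p, x, q) \<Longrightarrow> edge_label A f (p, x) < edge_label A f (x, q)"
    unfolding edge_label_def using same_tail same_head through by fastforce+
qed

lemma edge_label_walk_mono:
  assumes ori: "orientation V E A" and hom: "homogeneous_labeling A f"
    and walk: "\<forall>t \<in> windows (a # b # l). allowed_turn E A t"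
  shows "edge_label A f (a, b) \<le> edge_label A f (last (butlast (a # b # l)), last (a # b # l)) \<and>
    ((\<exists>t \<in> windows (a # b # l). forward A t) \<longrightarrow>
      edge_label A f (a, b) < edge_label A f (last (butlast (a # b # l)), last (a # b # l)))"
  using walk
proof (induction l arbitrary: a b)
  case (Cons c l)
  let ?lab = "edge_label A f"
  let ?e = "(last (butlast (b # c # l)), last (b # c # l))"
  have turn: "allowed_turn E A (a, b, c)" using Cons.prems by simp
  have IH: "?lab (b, c) \<le> ?lab ?e"
    "(\<exists>t \<in> windows (b # c # l). forward A t) \<Longrightarrow> ?lab (b, c) < ?lab ?e"
    using Cons by simp_all
  have "?lab (a, b) \<le> ?lab ?e"
    using edge_label_allowed_turn(1)[OF ori hom turn] IH(1) by linarith
  moreover have "?lab (a, b) < ?lab ?e" if "\<exists>t \<in> windows (a # b # c # l). forward A t"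
  proof (cases "forward A (a, b, c)")
    case True
    then show ?thesis using edge_label_allowed_turn(2)[OF ori hom turn] IH(1) by linarith
  next
    case False
    with that have "\<exists>t \<in> windows (b # c # l). forward A t" by (simp del: forward.simps)
    then show ?thesis using edge_label_allowed_turn(1)[OF ori hom turn] IH(2) by linarith
  qed
  ultimately show ?case by simp
qed simp

lemma homogeneous_labeling_imp_no_bad_closed_walk:
  assumes "orientation V E A" and "homogeneous_labeling A f"
  shows "\<not> bad_closed_walk E A cs"
proof
  assume bad: "bad_closed_walk E A cs"
  then obtain x q where cs: "cs = x # q" by (cases cs) (auto simp: bad_closed_walk_def closed_windows_def)
  let ?z = "last (x # q)"
  \<comment> \<open>the open walk \<open>?z # cs @ [x]\<close> starts and ends by traversing the edge \<open>(?z, x)\<close>\<close>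
  have "closed_windows cs = windows (?z # x # q @ [x])" by (simp add: cs closed_windows_def)
  then have "edge_label A f (?z, x) < edge_label A f (?z, x)"
    using edge_label_walk_mono[OF assms, of ?z x "q @ [x]"] bad
    by (simp add: bad_closed_walk_def butlast_append)
  then show False by simp
qed

(* A closed walk passing through x as a-x-b and as c-x-d splits into two closed walks that pass
   through x as c-x-b and as a-x-d respectively. *)
lemma exchange_allowed_turns:
  assumes ori: "orientation V E A"
    and "allowed_turn E A (a, x, b)" "allowed_turn E A (c, x, d)"
  shows "allowed_turn E A (c, x, b) \<and> allowed_turn E A (a, x, d) \<and>
      (forward A (a, x, b) \<or> forward A (c, x, d) \<longrightarrow> forward A (c, x, b) \<or> forward A (a, x, d))
    \<or> allowed_turn E A (c, x, b) \<and> forward A (c, x, b)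
    \<or> allowed_turn E A (a, x, d) \<and> forward A (a, x, d)"
proof -
  have "(u, x) \<in> A \<or> (x, u) \<in> A" if "u \<in> {a, b, c, d}" for u
    using that assms orientation_arc_cases[OF ori] by auto
  moreover have "(u, x) \<in> A \<Longrightarrow> (x, u) \<notin> A" for u
    using orientation_asym[OF ori] by blast
  ultimately show ?thesis using assms by auto
qed

lemma bad_closed_walk_split:
  assumes ori: "orientation V E A" and bad: "bad_closed_walk E A (x # q @ x # r)"
  shows "bad_closed_walk E A (x # q) \<or> bad_closed_walk E A (x # r)"
proof -
  define a b c d where "a = last (x # r)" "b = hd (q @ [x])" "c = last (x # q)" "d = hd (r @ [x])"
  define Q R where "Q = windows (x # q @ [x])" "R = windows (x # r @ [x])"
  have whole: "closed_windows (x # q @ x # r) = Q \<union> R \<union> {(a, x, b), (c, x, d)}"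
    unfolding a_b_c_d_def Q_R_def by (simp add: closed_windows_split)
  have left: "closed_windows (x # q) = insert (c, x, b) Q"
    and right: "closed_windows (x # r) = insert (a, x, d) R"
    unfolding a_b_c_d_def Q_R_def by (simp_all add: closed_windows_Cons)
  have allowed: "\<forall>t \<in> Q \<union> R. allowed_turn E A t" "allowed_turn E A (a, x, b)" "allowed_turn E A (c, x, d)"
    using bad unfolding bad_closed_walk_def whole by auto
  obtain t where t: "t \<in> Q \<union> R \<union> {(a, x, b), (c, x, d)}" "forward A t"
    using bad unfolding bad_closed_walk_def whole by blast
  from exchange_allowed_turns[OF ori allowed(2,3)] t allowed(1) show ?thesis
    unfolding bad_closed_walk_def left right by blast
qed

lemma bad_closed_walk_shorten:
  assumes ori: "orientation V E A" and bad: "bad_closed_walk E A cs" and "\<not> distinct cs"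
  shows "\<exists>cs'. bad_closed_walk E A cs' \<and> length cs' < length cs"
proof -
  obtain p x q r where cs: "cs = p @ [x] @ q @ [x] @ r"
    using not_distinct_decomp[OF \<open>\<not> distinct cs\<close>] by blast
  have "rotate (length p) cs = x # q @ x # (r @ p)" by (simp add: cs rotate_append)
  then have "bad_closed_walk E A (x # q @ x # (r @ p))"
    using bad bad_closed_walk_rotate by metis
  then have "bad_closed_walk E A (x # q) \<or> bad_closed_walk E A (x # r @ p)"
    by (rule bad_closed_walk_split[OF ori])
  then show ?thesis by (auto simp: cs)
qed

lemma bad_closed_walk_imp_distinct:
  assumes "orientation V E A" and "bad_closed_walk E A cs"
  shows "\<exists>cs'. bad_closed_walk E A cs' \<and> distinct cs'"
  using assms(2)
proof (induction "length cs" arbitrary: cs rule: less_induct)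
  case less
  then show ?case using bad_closed_walk_shorten[OF assms(1)] by metis
qed

lemma card_rtrancl_predecessors_mono:
  assumes "finite X" "(a, b) \<in> R\<^sup>*"
  shows "card {d \<in> X. (d, a) \<in> R\<^sup>*} \<le> card {d \<in> X. (d, b) \<in> R\<^sup>*}"
  using assms by (intro card_mono) (auto intro: rtrancl_trans)

lemma card_rtrancl_predecessors_strict_mono:
  assumes "finite X" "(a, b) \<in> R\<^sup>*" "b \<in> X" "(b, a) \<notin> R\<^sup>*"
  shows "card {d \<in> X. (d, a) \<in> R\<^sup>*} < card {d \<in> X. (d, b) \<in> R\<^sup>*}"
  using assms by (intro psubset_card_mono) (auto intro: rtrancl_trans)

definition turns :: "('a \<times> 'a) set \<Rightarrow> ('a \<times> 'a) set \<Rightarrow> (('a \<times> 'a) \<times> ('a \<times> 'a)) set" where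
  "turns E A = {((p, x), (x, q)) | p x q. allowed_turn E A (p, x, q)}"

lemma rtrancl_turns_imp_walk:
  assumes "((a, b), (y, z)) \<in> (turns E A)\<^sup>*"
  shows "\<exists>l us. a # b # l = us @ [y, z] \<and> (\<forall>t \<in> windows (a # b # l). allowed_turn E A t)"
  using assms
proof (induction rule: converse_rtrancl_induct2)
  case refl
  show ?case by (rule exI[of _ "[]"]) simp
next
  case (step a b b' c)
  then obtain l us where l: "b' # c # l = us @ [y, z]" "\<forall>t \<in> windows (b' # c # l). allowed_turn E A t"
    by blast
  have "b' = b" and turn: "allowed_turn E A (a, b, c)" using step(1) by (auto simp: turns_def)
  have "a # b # c # l = (a # us) @ [y, z]" using l(1) \<open>b' = b\<close> by simp
  moreover have "\<forall>t \<in> windows (a # b # c # l). allowed_turn E A t"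
    using l(2) turn \<open>b' = b\<close> by simp
  ultimately show ?case by blast
qed

lemma rtrancl_turns_back_imp_bad_closed_walk:
  assumes "((v, w), (u, v)) \<in> (turns E A)\<^sup>*" "allowed_turn E A (u, v, w)" "forward A (u, v, w)"
  shows "\<exists>cs. bad_closed_walk E A cs"
proof -
  obtain l us where l: "v # w # l = us @ [u, v]" "\<forall>t \<in> windows (v # w # l). allowed_turn E A t"
    using rtrancl_turns_imp_walk[OF assms(1)] by blast
  have "hd (us @ [u]) = v" using l(1) by (cases us) simp_all
  then have "closed_windows (us @ [u]) = windows (u # v # w # l)"
    unfolding closed_windows_def l(1) by simp
  then have "bad_closed_walk E A (us @ [u])"
    using assms(2,3) l(2) by (simp add: bad_closed_walk_def)
  then show ?thesis ..
qed

lemma no_bad_closed_walk_imp_homogeneous_labeling: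
  assumes graph: "simple_graph V E" and ori: "orientation V E A"
    and no_bad: "\<And>cs. \<not> bad_closed_walk E A cs"
  shows "\<exists>f. homogeneous_labeling A f"
proof -
  let ?T = "(turns E A)\<^sup>*"
  define f where "f a = real (card {d \<in> E. (d, a) \<in> ?T})" for a
  have "finite E" and "sym E" using graph finite_subset by (auto simp: simple_graph_def)
  have AE: "A \<subseteq> E" by (rule orientation_subset[OF ori])
  have E_sym: "(v, u) \<in> E" if "(u, v) \<in> A" for u v
    using that AE \<open>sym E\<close> by (auto dest: symD)
  note asym = orientation_asym[OF ori]
  have f_mono: "f a \<le> f b" if "(a, b) \<in> ?T" for a b
    unfolding f_def using card_rtrancl_predecessors_mono[OF \<open>finite E\<close> that] by simp
  have same_tail: "((v, w), (v, w')) \<in> ?T" if "(v, w) \<in> A" "(v, w') \<in> A" for v w w'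
  proof -
    have "((v, w), (w, v)) \<in> turns E A" "((w, v), (v, w')) \<in> turns E A"
      using that AE E_sym asym unfolding turns_def by auto
    then show ?thesis by simp
  qed
  have same_head: "((u, v), (u', v)) \<in> ?T" if "(u, v) \<in> A" "(u', v) \<in> A" for u u' v
  proof -
    have "((u, v), (v, u')) \<in> turns E A" "((v, u'), (u', v)) \<in> turns E A"
      using that AE E_sym asym unfolding turns_def by auto
    then show ?thesis by simp
  qed
  have through: "f (u, v) < f (v, w)" if "(u, v) \<in> A" "(v, w) \<in> A" for u v w
  proof -
    have turn: "allowed_turn E A (u, v, w)" using that AE asym by auto
    then have "((u, v), (v, w)) \<in> ?T" unfolding turns_def by auto
    moreover have "((v, w), (u, v)) \<notin> ?T"
      using rtrancl_turns_back_imp_bad_closed_walk[OF _ turn] that no_bad by auto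
    ultimately show ?thesis
      unfolding f_def using card_rtrancl_predecessors_strict_mono[OF \<open>finite E\<close>] that AE by auto
  qed
  have "homogeneous_labeling A f"
    unfolding homogeneous_labeling_def
    using same_tail same_head through f_mono by (blast intro: order.antisym)
  then show ?thesis by blast
qed

theorem mainTheorem14:
  fixes V :: "'a set" and E A :: "('a \<times> 'a) set"
  assumes "simple_graph V E" and "orientation V E A"
  shows "(\<exists>f. homogeneous_labeling A f) \<longleftrightarrow>
         \<not> (\<exists>cs. set cs \<subseteq> V \<and> is_cycle E cs \<and> badly_oriented A cs)"
proof
  assume "\<exists>f. homogeneous_labeling A f"
  then show "\<not> (\<exists>cs. set cs \<subseteq> V \<and> is_cycle E cs \<and> badly_oriented A cs)"
    using homogeneous_labeling_imp_no_bad_closed_walk[OF assms(2)]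
      badly_oriented_cycle_is_bad_closed_walk by blast
next
  assume no_cycle: "\<not> (\<exists>cs. set cs \<subseteq> V \<and> is_cycle E cs \<and> badly_oriented A cs)"
  have "\<not> bad_closed_walk E A cs" for cs
    using bad_closed_walk_imp_distinct[OF assms(2)] distinct_bad_closed_walk_is_cycle[OF assms]
      no_cycle by blast
  then show "\<exists>f. homogeneous_labeling A f"
    by (rule no_bad_closed_walk_imp_homogeneous_labeling[OF assms])
qed

end
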